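(* Let $\alpha\in(0,1]$ and $\beta\in(0,\alpha)$. Every $K\in\mathcal{K}$ satisfies \[ |K(x,y)-K(x',y')|\le3\|K\|(|x-x'|+|y-y'|)^\beta . \] If $K,K'\in\mathcal{K}$, then $K+K'\in\mathcal{K}$ with $\|K+K'\|\le\|K\|+\|K'\|$, and (for compatible matrix sizes) $KK'\in\mathcal{K}$ with $\|KK'\|\le6\|K\|\|K'\|$. Finally, if $K\in\mathcal{K}$ is everywhere invertible and $|K^{-1}|\le h$ for some finite $h$, then $K^{-1}\in\mathcal{K}$ and $\|K^{-1}\|\le5\max(1,h^3)\max(1,\|K\|^3)$.
   Context: $\mathbb{R}^d=\mathbb{R}^{d_u}\times\mathbb{R}^{d_s}$ with points $(x,y)$; matrix norms are operator norms. $\mathcal{K}=\mathcal{K}^{\alpha,\beta}$ is the class of matrix-valued functions $K$ on $\mathbb{R}^d$ for which there is a constant $C$ such that for all $x,x'\in\mathbb{R}^{d_u}$ and $y,y'\in\mathbb{R}^{d_s}$: $|K(x,y)|\le C$; $|K(x,y)-K(x',y)|\le C|x-x'|^\beta$; $|K(x,y)-K(x,y')|\le C|y-y'|^\alpha$; and $|K(x,y)-K(x',y)-K(x,y')+K(x',y')|\le C|x-x'|^\beta|y-y'|^{\alpha-\beta}$. For $K\in\mathcal{K}$, $\|K\|$ is the smallest such $C$. *)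

theory Defs
  imports "HOL-Analysis.Analysis"
begin

definition mnorm :: "real^'n^'m \<Rightarrow> real" where
  "mnorm A = onorm (\<lambda>v. A *v v)"

text \<open>C is an admissible constant for K in the class K^{alpha,beta}.
  Points of R^d = R^{d_u} x R^{d_s} are pairs (x,y).\<close>
definition Kbound :: "real \<Rightarrow> real \<Rightarrow> ('u::euclidean_space \<Rightarrow> 's::euclidean_space \<Rightarrow> real^'n^'m) \<Rightarrow> real \<Rightarrow> bool" where
  "Kbound \<alpha> \<beta> K C \<longleftrightarrow>
     (\<forall>x y. mnorm (K x y) \<le> C) \<and>
     (\<forall>x x' y. mnorm (K x y - K x' y) \<le> C * norm (x - x') powr \<beta>) \<and>
     (\<forall>x y y'. mnorm (K x y - K x y') \<le> C * norm (y - y') powr \<alpha>) \<and>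
     (\<forall>x x' y y'. mnorm (K x y - K x' y - K x y' + K x' y')
                     \<le> C * norm (x - x') powr \<beta> * norm (y - y') powr (\<alpha> - \<beta>))"

definition inK :: "real \<Rightarrow> real \<Rightarrow> ('u::euclidean_space \<Rightarrow> 's::euclidean_space \<Rightarrow> real^'n^'m) \<Rightarrow> bool" where
  "inK \<alpha> \<beta> K \<longleftrightarrow> (\<exists>C. Kbound \<alpha> \<beta> K C)"

definition Knorm :: "real \<Rightarrow> real \<Rightarrow> ('u::euclidean_space \<Rightarrow> 's::euclidean_space \<Rightarrow> real^'n^'m) \<Rightarrow> real" where
  "Knorm \<alpha> \<beta> K = Inf {C. Kbound \<alpha> \<beta> K C}"

end

theory Submission
  imports Defs
begin

(*
  All estimates come from splitting increments of K, of K K' and of K\<inverse> into increments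
  of the factors: first and mixed differences of a product expand into sums of products of
  differences, and those of an inverse follow from K\<inverse> - L\<inverse> = K\<inverse> (L - K) L\<inverse>, applied
  twice for the mixed difference. Wherever a factor is needed with y-exponent \<beta> or \<alpha> - \<beta>
  instead of \<alpha>, twice its sup bound is interpolated with its \<alpha>-Hoelder bound through
  min (a, b t\<^sup>\<alpha>) \<le> max (a, b) t\<^sup>\<gamma> for 0 \<le> \<gamma> \<le> \<alpha>; the constants then simply add up.
*)

lemma matrix_add_rdistrib: "((A::real^'n^'m) + B) ** (C::real^'p^'n) = A ** C + B ** C"
  by (vector matrix_matrix_mult_def sum.distrib[symmetric] field_simps)

lemma matrix_diff_ldistrib: "(A::real^'n^'m) ** ((B::real^'p^'n) - C) = A ** B - A ** C"
  by (vector matrix_matrix_mult_def sum_subtractf[symmetric] field_simps)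

lemma matrix_diff_rdistrib: "((A::real^'n^'m) - B) ** (C::real^'p^'n) = A ** C - B ** C"
  by (vector matrix_matrix_mult_def sum_subtractf[symmetric] field_simps)

lemma matrix_mult_mixed_diff:
  fixes A1 A2 A3 A4 :: "real^'n^'m" and B1 B2 B3 B4 :: "real^'p^'n"
  shows "A1 ** B1 - A2 ** B2 - A3 ** B3 + A4 ** B4 =
    (A1 - A2 - A3 + A4) ** B1 + (A3 - A4) ** (B1 - B3) + (A2 - A4) ** (B1 - B2)
      + A4 ** (B1 - B2 - B3 + B4)"
  by (simp add: matrix_add_rdistrib matrix_diff_rdistrib matrix_add_ldistrib
      matrix_diff_ldistrib algebra_simps)

lemma matrix_inv_left: "invertible (A::real^'n^'n) \<Longrightarrow> matrix_inv A ** A = mat 1"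
  unfolding invertible_def matrix_inv_def by (rule someI_ex[THEN conjunct2])

lemma matrix_inv_right: "invertible (A::real^'n^'n) \<Longrightarrow> A ** matrix_inv A = mat 1"
  unfolding invertible_def matrix_inv_def by (rule someI_ex[THEN conjunct1])

lemma matrix_inv_diff:
  fixes A B :: "real^'n^'n"
  assumes "invertible A" "invertible B"
  shows "matrix_inv A - matrix_inv B = (matrix_inv A ** (B - A)) ** matrix_inv B"
  by (simp add: matrix_diff_ldistrib matrix_diff_rdistrib matrix_mul_assoc[symmetric]
      matrix_inv_right[OF assms(2)] matrix_mul_assoc matrix_inv_left[OF assms(1)])

lemma matrix_inv_mixed_diff:
  fixes A1 A2 A3 A4 :: "real^'n^'n"
  assumes "invertible A1" "invertible A2" "invertible A3" "invertible A4"
  shows "matrix_inv A1 - matrix_inv A2 - matrix_inv A3 + matrix_inv A4 =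
      ((matrix_inv A1 - matrix_inv A3) ** (A4 - A3)) ** matrix_inv A2
      - (matrix_inv A1 ** (A1 - A2 - A3 + A4)) ** matrix_inv A2
      + (matrix_inv A3 ** (A4 - A3)) ** (matrix_inv A2 - matrix_inv A4)"
proof -
  have "matrix_inv A1 ** A1 ** matrix_inv A2 = matrix_inv A2"
    "matrix_inv A1 ** A2 ** matrix_inv A2 = matrix_inv A1"
    "matrix_inv A3 ** A3 ** matrix_inv A4 = matrix_inv A4"
    "matrix_inv A3 ** A4 ** matrix_inv A4 = matrix_inv A3"
    by (simp_all add: matrix_inv_left matrix_inv_right assms
        flip: matrix_mul_assoc[of "matrix_inv A1"] matrix_mul_assoc[of "matrix_inv A3"])
  then show ?thesis
    by (simp add: matrix_diff_ldistrib matrix_diff_rdistrib matrix_add_ldistrib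
        matrix_add_rdistrib algebra_simps)
qed

lemma mnorm_nonneg: "0 \<le> mnorm (A::real^'n^'m)"
  unfolding mnorm_def by (rule onorm_pos_le) simp

lemma mnorm_triangle: "mnorm ((A::real^'n^'m) + B) \<le> mnorm A + mnorm B"
  unfolding mnorm_def matrix_vector_mult_add_rdistrib by (rule onorm_triangle) simp_all

lemma mnorm_minus: "mnorm (- (A::real^'n^'m)) = mnorm A"
proof -
  have "(\<lambda>v. (- A) *v v) = (\<lambda>v. - (A *v v))"
    by (rule ext) (metis add.inverse_neutral add_eq_0_iff matrix_vector_mult_0 matrix_vector_mult_add_rdistrib)
  then show ?thesis
    unfolding mnorm_def using onorm_neg[of "\<lambda>v. A *v v"] by simp
qed

lemma mnorm_minus_commute: "mnorm ((A::real^'n^'m) - B) = mnorm (B - A)"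
  by (metis minus_diff_eq mnorm_minus)

lemma mnorm_add_le:
  "mnorm (A::real^'n^'m) \<le> a \<Longrightarrow> mnorm B \<le> b \<Longrightarrow> mnorm (A + B) \<le> a + b"
  using mnorm_triangle[of A B] by linarith

lemma mnorm_diff_le:
  "mnorm (A::real^'n^'m) \<le> a \<Longrightarrow> mnorm B \<le> b \<Longrightarrow> mnorm (A - B) \<le> a + b"
  by (metis diff_conv_add_uminus mnorm_add_le mnorm_minus)

lemma mnorm_mult: "mnorm ((A::real^'n^'m) ** (B::real^'p^'n)) \<le> mnorm A * mnorm B"
proof -
  have "(\<lambda>v. (A ** B) *v v) = (\<lambda>v. A *v v) \<circ> (\<lambda>v. B *v v)"
    by (rule ext) (simp add: matrix_vector_mul_assoc)
  then show ?thesis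
    unfolding mnorm_def using onorm_compose[of "\<lambda>v. A *v v" "\<lambda>v. B *v v"] by simp
qed

lemma mnorm_mult_le:
  "mnorm (A::real^'n^'m) \<le> a \<Longrightarrow> mnorm (B::real^'p^'n) \<le> b \<Longrightarrow> mnorm (A ** B) \<le> a * b"
  by (meson mnorm_nonneg mnorm_mult mult_mono order_trans)

lemma mnorm_mult_diff_le:
  fixes A A' :: "real^'n^'m" and B B' :: "real^'p^'n"
  assumes "mnorm (A - A') \<le> a * t" "mnorm B \<le> b" "mnorm A' \<le> a" "mnorm (B - B') \<le> b * t"
  shows "mnorm (A ** B - A' ** B') \<le> 2 * a * b * t"
proof -
  have "A ** B - A' ** B' = (A - A') ** B + A' ** (B - B')"
    by (simp add: matrix_diff_ldistrib matrix_diff_rdistrib)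
  moreover have "mnorm ((A - A') ** B + A' ** (B - B')) \<le> a * t * b + a * (b * t)"
    by (intro mnorm_add_le mnorm_mult_le assms)
  ultimately show ?thesis by (simp add: algebra_simps)
qed

lemma mnorm_matrix_mult_mixed_diff_le:
  fixes A1 A2 A3 A4 :: "real^'n^'m" and B1 B2 B3 B4 :: "real^'p^'n"
  assumes "mnorm (A1 - A2 - A3 + A4) \<le> a * s * r" "mnorm B1 \<le> b"
    and "mnorm (A3 - A4) \<le> a * s" "mnorm (B1 - B3) \<le> 2 * b * r"
    and "mnorm (A2 - A4) \<le> 2 * a * r" "mnorm (B1 - B2) \<le> b * s"
    and "mnorm A4 \<le> a" "mnorm (B1 - B2 - B3 + B4) \<le> b * s * r"
  shows "mnorm (A1 ** B1 - A2 ** B2 - A3 ** B3 + A4 ** B4) \<le> 6 * a * b * s * r"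
proof -
  have "mnorm (A1 ** B1 - A2 ** B2 - A3 ** B3 + A4 ** B4)
      \<le> a * s * r * b + a * s * (2 * b * r) + 2 * a * r * (b * s) + a * (b * s * r)"
    unfolding matrix_mult_mixed_diff using assms by (intro mnorm_add_le mnorm_mult_le)
  then show ?thesis
    by (simp add: algebra_simps)
qed

lemma mnorm_matrix_inv_diff_le:
  fixes A B :: "real^'n^'n"
  assumes "invertible A" "invertible B"
    and "mnorm (matrix_inv A) \<le> h" "mnorm (matrix_inv B) \<le> h" "mnorm (A - B) \<le> c"
  shows "mnorm (matrix_inv A - matrix_inv B) \<le> h * c * h"
  unfolding matrix_inv_diff[OF assms(1,2)]
  using assms(3-5) by (intro mnorm_mult_le) (simp_all add: mnorm_minus_commute)

lemma mnorm_matrix_inv_mixed_diff_le: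
  fixes A1 A2 A3 A4 :: "real^'n^'n"
  assumes "invertible A1" "invertible A2" "invertible A3" "invertible A4"
    and "mnorm (matrix_inv A1) \<le> h" "mnorm (matrix_inv A2) \<le> h" "mnorm (matrix_inv A3) \<le> h"
    and "mnorm (A1 - A2 - A3 + A4) \<le> c * s * r" "mnorm (A3 - A4) \<le> c * s"
    and "mnorm (matrix_inv A1 - matrix_inv A3) \<le> e * r"
    and "mnorm (matrix_inv A2 - matrix_inv A4) \<le> e * r"
  shows "mnorm (matrix_inv A1 - matrix_inv A2 - matrix_inv A3 + matrix_inv A4)
    \<le> (h * h * c + 2 * e * c * h) * s * r"
proof -
  have "mnorm (A4 - A3) \<le> c * s"
    using assms(9) by (simp add: mnorm_minus_commute)
  then have "mnorm (matrix_inv A1 - matrix_inv A2 - matrix_inv A3 + matrix_inv A4)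
      \<le> e * r * (c * s) * h + h * (c * s * r) * h + h * (c * s) * (e * r)"
    unfolding matrix_inv_mixed_diff[OF assms(1-4)] using assms(5-11)
    by (intro mnorm_add_le mnorm_diff_le mnorm_mult_le)
  then show ?thesis
    by (simp add: algebra_simps)
qed

lemma le_max_mult_powr:
  fixes t a b v \<gamma> \<alpha> :: real
  assumes "0 \<le> t" "0 \<le> a" "0 \<le> \<gamma>" "\<gamma> \<le> \<alpha>" "v \<le> a" "v \<le> b * t powr \<alpha>"
  shows "v \<le> max a b * t powr \<gamma>"
proof (cases "t \<le> 1")
  case True
  then have "t powr \<alpha> \<le> t powr \<gamma>"
    using powr_mono' assms by blast
  then have "b * t powr \<alpha> \<le> max a b * t powr \<gamma>"
    by (intro mult_mono) (auto simp: assms le_max_iff_disj)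
  with assms show ?thesis by linarith
next
  case False
  then have "1 \<le> t powr \<gamma>"
    using ge_one_powr_ge_zero assms by simp
  then have "max a b * 1 \<le> max a b * t powr \<gamma>"
    by (intro mult_left_mono) (auto simp: assms le_max_iff_disj)
  with assms(5) show ?thesis by (simp add: le_max_iff_disj)
qed

lemma le_cInf_mult:
  fixes S :: "real set"
  assumes "S \<noteq> {}" "\<And>C. C \<in> S \<Longrightarrow> 0 \<le> C" "\<And>C. C \<in> S \<Longrightarrow> v \<le> C * a" "0 \<le> a"
  shows "v \<le> Inf S * a"
proof (cases "a = 0")
  case True
  with assms show ?thesis by force
next
  case False
  with assms have "v / a \<le> Inf S"
    by (intro cInf_greatest) (auto simp: divide_le_eq)
  with False assms(4) show ?thesis
    by (simp add: divide_le_eq)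
qed

lemma power_le_max_one_power: "0 \<le> (x::real) \<Longrightarrow> k \<le> n \<Longrightarrow> x ^ k \<le> max 1 (x ^ n)"
  by (cases "x \<le> 1") (auto simp: le_max_iff_disj intro: power_le_one power_increasing)

lemma max_one_cube_bounds:
  fixes h C :: real
  defines "M \<equiv> max 1 (h ^ 3) * max 1 (C ^ 3)"
  assumes "0 \<le> h" "0 \<le> C"
  shows "h \<le> M" "h * h * C \<le> M" "h * h * C + 2 * max (2 * h) (h * h * C) * C * h \<le> 5 * M"
proof -
  have M: "h ^ i * C ^ j \<le> M" if "i \<le> 3" "j \<le> 3" for i j
    unfolding M_def using assms that by (intro mult_mono power_le_max_one_power) auto
  show "h \<le> M" "h * h * C \<le> M"
    using M[of 1 0] M[of 2 1] by (simp_all add: power2_eq_square)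
  have "max (2 * h) (h * h * C) * C * h \<le> 2 * M"
  proof (cases "2 * h \<le> h * h * C")
    case True
    then have "max (2 * h) (h * h * C) * C * h = h ^ 3 * C ^ 2"
      by (simp add: power2_eq_square power3_eq_cube)
    also have "\<dots> \<le> 2 * M"
      using M[of 3 2] M[of 0 0] by simp
    finally show ?thesis .
  next
    case False
    then have "max (2 * h) (h * h * C) * C * h = 2 * (h ^ 2 * C ^ 1)"
      by (simp add: power2_eq_square)
    also have "\<dots> \<le> 2 * M"
      using M[of 2 1] by simp
    finally show ?thesis .
  qed
  then show "h * h * C + 2 * max (2 * h) (h * h * C) * C * h \<le> 5 * M"
    using \<open>h * h * C \<le> M\<close> by linarith
qed

context
  fixes \<alpha> \<beta> :: real and K :: "'u::euclidean_space \<Rightarrow> 's::euclidean_space \<Rightarrow> real^'n^'m"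
begin

lemma Kbound_bounded: "Kbound \<alpha> \<beta> K C \<Longrightarrow> mnorm (K x y) \<le> C"
  unfolding Kbound_def by blast

lemma Kbound_diff_x: "Kbound \<alpha> \<beta> K C \<Longrightarrow> mnorm (K x y - K x' y) \<le> C * norm (x - x') powr \<beta>"
  unfolding Kbound_def by blast

lemma Kbound_diff_y: "Kbound \<alpha> \<beta> K C \<Longrightarrow> mnorm (K x y - K x y') \<le> C * norm (y - y') powr \<alpha>"
  unfolding Kbound_def by blast

lemma Kbound_mixed_diff:
  "Kbound \<alpha> \<beta> K C \<Longrightarrow> mnorm (K x y - K x' y - K x y' + K x' y')
     \<le> C * norm (x - x') powr \<beta> * norm (y - y') powr (\<alpha> - \<beta>)"
  unfolding Kbound_def by blast

lemma Kbound_nonneg: "Kbound \<alpha> \<beta> K C \<Longrightarrow> 0 \<le> C"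
  by (meson Kbound_bounded mnorm_nonneg order_trans)

(* Each defining inequality has the form v \<le> C * w with w \<ge> 0, so it passes to the infimum. *)
lemma Kbound_Knorm:
  assumes "inK \<alpha> \<beta> K"
  shows "Kbound \<alpha> \<beta> K (Knorm \<alpha> \<beta> K)"
proof -
  have "{C. Kbound \<alpha> \<beta> K C} \<noteq> {}"
    using assms unfolding inK_def by auto
  then have le_Knorm: "v \<le> Knorm \<alpha> \<beta> K * a" if "0 \<le> a" "\<And>C. Kbound \<alpha> \<beta> K C \<Longrightarrow> v \<le> C * a"
    for v a
    unfolding Knorm_def using that by (intro le_cInf_mult) (auto intro: Kbound_nonneg)
  show ?thesis
    unfolding Kbound_def
  proof (intro conjI allI)
    fix x x' y y'
    show "mnorm (K x y) \<le> Knorm \<alpha> \<beta> K"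
      using le_Knorm[of 1] by (simp add: Kbound_bounded)
    show "mnorm (K x y - K x' y) \<le> Knorm \<alpha> \<beta> K * norm (x - x') powr \<beta>"
      by (rule le_Knorm) (simp_all add: Kbound_diff_x)
    show "mnorm (K x y - K x y') \<le> Knorm \<alpha> \<beta> K * norm (y - y') powr \<alpha>"
      by (rule le_Knorm) (simp_all add: Kbound_diff_y)
    show "mnorm (K x y - K x' y - K x y' + K x' y')
        \<le> Knorm \<alpha> \<beta> K * norm (x - x') powr \<beta> * norm (y - y') powr (\<alpha> - \<beta>)"
      unfolding mult.assoc by (rule le_Knorm) (simp_all add: Kbound_mixed_diff flip: mult.assoc)
  qed
qed

lemma Knorm_le: "Kbound \<alpha> \<beta> K C \<Longrightarrow> Knorm \<alpha> \<beta> K \<le> C"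
  unfolding Knorm_def
  by (rule cInf_lower) (auto simp: bdd_below_def intro: Kbound_nonneg)

lemma Kbound_imp_inK: "Kbound \<alpha> \<beta> K C \<Longrightarrow> inK \<alpha> \<beta> K"
  unfolding inK_def by blast

lemma Kbound_diff_y_powr:
  assumes "Kbound \<alpha> \<beta> K C" "0 \<le> \<gamma>" "\<gamma> \<le> \<alpha>"
  shows "mnorm (K x y - K x y') \<le> 2 * C * norm (y - y') powr \<gamma>"
proof -
  have "mnorm (K x y - K x y') \<le> max (C + C) C * norm (y - y') powr \<gamma>"
    using Kbound_nonneg[OF assms(1)]
    by (intro le_max_mult_powr[OF _ _ assms(2,3)] mnorm_diff_le
        Kbound_bounded[OF assms(1)] Kbound_diff_y[OF assms(1)]) auto
  with Kbound_nonneg[OF assms(1)] show ?thesis by simp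
qed

lemma Kbound_hoelder:
  assumes K: "Kbound \<alpha> \<beta> K C" and "0 \<le> \<beta>" "\<beta> \<le> \<alpha>"
  shows "mnorm (K x y - K x' y') \<le> 3 * C * (norm (x - x') + norm (y - y')) powr \<beta>"
proof -
  define D where "D = (norm (x - x') + norm (y - y')) powr \<beta>"
  have C: "0 \<le> C" using Kbound_nonneg[OF K] .
  have "mnorm (K x y - K x' y) \<le> C * norm (x - x') powr \<beta>"
    using K by (rule Kbound_diff_x)
  also have "\<dots> \<le> C * D"
    unfolding D_def using assms C by (intro mult_left_mono powr_mono2) auto
  finally have dx: "mnorm (K x y - K x' y) \<le> C * D" .
  have "mnorm (K x' y - K x' y') \<le> 2 * C * norm (y - y') powr \<beta>"
    using assms by (intro Kbound_diff_y_powr)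
  also have "\<dots> \<le> 2 * C * D"
    unfolding D_def using assms C by (intro mult_left_mono powr_mono2) auto
  finally have dy: "mnorm (K x' y - K x' y') \<le> 2 * C * D" .
  have "mnorm ((K x y - K x' y) + (K x' y - K x' y')) \<le> C * D + 2 * C * D"
    using dx dy by (rule mnorm_add_le)
  then show ?thesis
    unfolding D_def by simp
qed

end

lemma Kbound_add:
  fixes K K' :: "'u::euclidean_space \<Rightarrow> 's::euclidean_space \<Rightarrow> real^'n^'m"
  assumes K: "Kbound \<alpha> \<beta> K C" and K': "Kbound \<alpha> \<beta> K' C'"
  shows "Kbound \<alpha> \<beta> (\<lambda>x y. K x y + K' x y) (C + C')"
  unfolding Kbound_def distrib_right
proof (intro conjI allI)
  fix x x' y y'
  show "mnorm (K x y + K' x y) \<le> C + C'"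
    by (intro mnorm_add_le Kbound_bounded[OF K] Kbound_bounded[OF K'])
  have "mnorm ((K x y - K x' y) + (K' x y - K' x' y))
      \<le> C * norm (x - x') powr \<beta> + C' * norm (x - x') powr \<beta>"
    by (intro mnorm_add_le Kbound_diff_x[OF K] Kbound_diff_x[OF K'])
  then show "mnorm (K x y + K' x y - (K x' y + K' x' y))
      \<le> C * norm (x - x') powr \<beta> + C' * norm (x - x') powr \<beta>"
    by (simp add: algebra_simps)
  have "mnorm ((K x y - K x y') + (K' x y - K' x y'))
      \<le> C * norm (y - y') powr \<alpha> + C' * norm (y - y') powr \<alpha>"
    by (intro mnorm_add_le Kbound_diff_y[OF K] Kbound_diff_y[OF K'])
  then show "mnorm (K x y + K' x y - (K x y' + K' x y'))
      \<le> C * norm (y - y') powr \<alpha> + C' * norm (y - y') powr \<alpha>"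
    by (simp add: algebra_simps)
  have "mnorm ((K x y - K x' y - K x y' + K x' y') + (K' x y - K' x' y - K' x y' + K' x' y'))
      \<le> C * norm (x - x') powr \<beta> * norm (y - y') powr (\<alpha> - \<beta>)
        + C' * norm (x - x') powr \<beta> * norm (y - y') powr (\<alpha> - \<beta>)"
    by (intro mnorm_add_le Kbound_mixed_diff[OF K] Kbound_mixed_diff[OF K'])
  then show "mnorm (K x y + K' x y - (K x' y + K' x' y) - (K x y' + K' x y') + (K x' y' + K' x' y'))
      \<le> C * norm (x - x') powr \<beta> * norm (y - y') powr (\<alpha> - \<beta>)
        + C' * norm (x - x') powr \<beta> * norm (y - y') powr (\<alpha> - \<beta>)"
    by (simp add: algebra_simps)
qed

lemma Kbound_mult:
  fixes K :: "'u::euclidean_space \<Rightarrow> 's::euclidean_space \<Rightarrow> real^'n^'m"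
    and K' :: "'u \<Rightarrow> 's \<Rightarrow> real^'p^'n"
  assumes K: "Kbound \<alpha> \<beta> K C" and K': "Kbound \<alpha> \<beta> K' C'" and "0 \<le> \<beta>" "\<beta> \<le> \<alpha>"
  shows "Kbound \<alpha> \<beta> (\<lambda>x y. K x y ** K' x y) (6 * C * C')"
  unfolding Kbound_def
proof (intro conjI allI)
  fix x x' :: 'u and y y' :: 's
  define s where "s = norm (x - x') powr \<beta>"
  define t where "t = norm (y - y') powr \<alpha>"
  have C: "0 \<le> C" and C': "0 \<le> C'"
    using Kbound_nonneg[OF K] Kbound_nonneg[OF K'] .
  then have CC': "0 \<le> C * C'"
    by simp
  have "mnorm (K x y ** K' x y) \<le> C * C'"
    by (intro mnorm_mult_le Kbound_bounded[OF K] Kbound_bounded[OF K'])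
  with CC' show "mnorm (K x y ** K' x y) \<le> 6 * C * C'"
    by linarith
  have "mnorm (K x y ** K' x y - K x' y ** K' x' y) \<le> 2 * C * C' * s"
    unfolding s_def
    by (rule mnorm_mult_diff_le[OF Kbound_diff_x[OF K] Kbound_bounded[OF K']
          Kbound_bounded[OF K] Kbound_diff_x[OF K']])
  also have "\<dots> \<le> 6 * C * C' * s"
    using C C' by (intro mult_right_mono) (simp_all add: s_def)
  finally show "mnorm (K x y ** K' x y - K x' y ** K' x' y) \<le> 6 * C * C' * norm (x - x') powr \<beta>"
    unfolding s_def .
  have "mnorm (K x y ** K' x y - K x y' ** K' x y') \<le> 2 * C * C' * t"
    unfolding t_def
    by (rule mnorm_mult_diff_le[OF Kbound_diff_y[OF K] Kbound_bounded[OF K']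
          Kbound_bounded[OF K] Kbound_diff_y[OF K']])
  also have "\<dots> \<le> 6 * C * C' * t"
    using C C' by (intro mult_right_mono) (simp_all add: t_def)
  finally show "mnorm (K x y ** K' x y - K x y' ** K' x y') \<le> 6 * C * C' * norm (y - y') powr \<alpha>"
    unfolding t_def .
  have \<gamma>: "0 \<le> \<alpha> - \<beta>" "\<alpha> - \<beta> \<le> \<alpha>"
    using assms by auto
  show "mnorm (K x y ** K' x y - K x' y ** K' x' y - K x y' ** K' x y' + K x' y' ** K' x' y')
      \<le> 6 * C * C' * norm (x - x') powr \<beta> * norm (y - y') powr (\<alpha> - \<beta>)"
    by (intro mnorm_matrix_mult_mixed_diff_le Kbound_bounded[OF K] Kbound_bounded[OF K']
        Kbound_diff_x[OF K] Kbound_diff_x[OF K'] Kbound_diff_y_powr[OF K \<gamma>]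
        Kbound_diff_y_powr[OF K' \<gamma>] Kbound_mixed_diff[OF K] Kbound_mixed_diff[OF K'])
qed

lemma Kbound_matrix_inv:
  fixes K :: "'u::euclidean_space \<Rightarrow> 's::euclidean_space \<Rightarrow> real^'n^'n"
  assumes K: "Kbound \<alpha> \<beta> K C" and "0 \<le> \<beta>" "\<beta> \<le> \<alpha>"
    and inv: "\<And>x y. invertible (K x y)" and h: "\<And>x y. mnorm (matrix_inv (K x y)) \<le> h"
  shows "Kbound \<alpha> \<beta> (\<lambda>x y. matrix_inv (K x y)) (5 * max 1 (h ^ 3) * max 1 (C ^ 3))"
proof -
  define M where "M = max 1 (h ^ 3) * max 1 (C ^ 3)"
  define E where "E = max (2 * h) (h * h * C)"
  have C: "0 \<le> C"
    using Kbound_nonneg[OF K] .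
  have h0: "0 \<le> h"
    using mnorm_nonneg h order_trans by blast
  have hM: "h \<le> M" and hhC: "h * h * C \<le> M" and EM: "h * h * C + 2 * E * C * h \<le> 5 * M"
    using max_one_cube_bounds[OF h0 C] unfolding M_def E_def by auto
  have diff: "mnorm (matrix_inv (K x y) - matrix_inv (K x' y')) \<le> h * h * C * t"
    if "mnorm (K x y - K x' y') \<le> C * t" for x x' y y' t
    using mnorm_matrix_inv_diff_le[OF inv inv h h that] by (simp add: algebra_simps)
  have diff_y: "mnorm (matrix_inv (K x y) - matrix_inv (K x y')) \<le> E * norm (y - y') powr (\<alpha> - \<beta>)"
    for x y y'
  proof -
    have "mnorm (matrix_inv (K x y) - matrix_inv (K x y'))
        \<le> max (h + h) (h * h * C) * norm (y - y') powr (\<alpha> - \<beta>)"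
      by (rule le_max_mult_powr[OF norm_ge_zero _ _ _ mnorm_diff_le[OF h h]
            diff[OF Kbound_diff_y[OF K]]])
        (use h0 assms(2,3) in auto)
    then show ?thesis
      unfolding E_def mult_2 .
  qed
  have "Kbound \<alpha> \<beta> (\<lambda>x y. matrix_inv (K x y)) (5 * M)"
    unfolding Kbound_def
  proof (intro conjI allI)
    fix x x' :: 'u and y y' :: 's
    show "mnorm (matrix_inv (K x y)) \<le> 5 * M"
      using h[of x y] hM h0 by linarith
    show "mnorm (matrix_inv (K x y) - matrix_inv (K x' y)) \<le> 5 * M * norm (x - x') powr \<beta>"
      using hhC hM h0 by (intro order_trans[OF diff[OF Kbound_diff_x[OF K]]] mult_right_mono) auto
    show "mnorm (matrix_inv (K x y) - matrix_inv (K x y')) \<le> 5 * M * norm (y - y') powr \<alpha>"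
      using hhC hM h0 by (intro order_trans[OF diff[OF Kbound_diff_y[OF K]]] mult_right_mono) auto
    show "mnorm (matrix_inv (K x y) - matrix_inv (K x' y) - matrix_inv (K x y') + matrix_inv (K x' y'))
        \<le> 5 * M * norm (x - x') powr \<beta> * norm (y - y') powr (\<alpha> - \<beta>)"
      using EM
      by (intro order_trans[OF mnorm_matrix_inv_mixed_diff_le[OF inv inv inv inv h h h
            Kbound_mixed_diff[OF K] Kbound_diff_x[OF K] diff_y diff_y]] mult_right_mono) auto
  qed
  then show ?thesis
    by (simp add: M_def mult.assoc)
qed

theorem mainTheorem10:
  fixes \<alpha> \<beta> :: real
  assumes "0 < \<alpha>" and "\<alpha> \<le> 1" and "0 < \<beta>" and "\<beta> < \<alpha>"
  shows
   "(\<forall>(K :: 'u::euclidean_space \<Rightarrow> 's::euclidean_space \<Rightarrow> real^'n^'m) x x' y y'.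
       inK \<alpha> \<beta> K \<longrightarrow>
       mnorm (K x y - K x' y') \<le> 3 * Knorm \<alpha> \<beta> K * (norm (x - x') + norm (y - y')) powr \<beta>)
  \<and> (\<forall>(K :: 'u \<Rightarrow> 's \<Rightarrow> real^'n^'m) K'.
       inK \<alpha> \<beta> K \<and> inK \<alpha> \<beta> K' \<longrightarrow>
       inK \<alpha> \<beta> (\<lambda>x y. K x y + K' x y) \<and>
       Knorm \<alpha> \<beta> (\<lambda>x y. K x y + K' x y) \<le> Knorm \<alpha> \<beta> K + Knorm \<alpha> \<beta> K')
  \<and> (\<forall>(K :: 'u \<Rightarrow> 's \<Rightarrow> real^'n^'m) (K' :: 'u \<Rightarrow> 's \<Rightarrow> real^'p^'n).
       inK \<alpha> \<beta> K \<and> inK \<alpha> \<beta> K' \<longrightarrow>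
       inK \<alpha> \<beta> (\<lambda>x y. K x y ** K' x y) \<and>
       Knorm \<alpha> \<beta> (\<lambda>x y. K x y ** K' x y) \<le> 6 * Knorm \<alpha> \<beta> K * Knorm \<alpha> \<beta> K')
  \<and> (\<forall>(K :: 'u \<Rightarrow> 's \<Rightarrow> real^'q^'q) h.
       inK \<alpha> \<beta> K \<and> (\<forall>x y. invertible (K x y)) \<and>
       (\<forall>x y. mnorm (matrix_inv (K x y)) \<le> h) \<longrightarrow>
       inK \<alpha> \<beta> (\<lambda>x y. matrix_inv (K x y)) \<and>
       Knorm \<alpha> \<beta> (\<lambda>x y. matrix_inv (K x y))
         \<le> 5 * max 1 (h ^ 3) * max 1 (Knorm \<alpha> \<beta> K ^ 3))"
proof (intro conjI allI impI)
  have \<beta>: "0 \<le> \<beta>" "\<beta> \<le> \<alpha>"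
    using assms by auto
  show "mnorm (K x y - K x' y') \<le> 3 * Knorm \<alpha> \<beta> K * (norm (x - x') + norm (y - y')) powr \<beta>"
    if "inK \<alpha> \<beta> K" for K :: "'u \<Rightarrow> 's \<Rightarrow> real^'n^'m" and x x' y y'
    using Kbound_Knorm[OF that] \<beta> by (rule Kbound_hoelder)
  show "inK \<alpha> \<beta> (\<lambda>x y. K x y + K' x y)"
    "Knorm \<alpha> \<beta> (\<lambda>x y. K x y + K' x y) \<le> Knorm \<alpha> \<beta> K + Knorm \<alpha> \<beta> K'"
    if "inK \<alpha> \<beta> K \<and> inK \<alpha> \<beta> K'" for K K' :: "'u \<Rightarrow> 's \<Rightarrow> real^'n^'m"
    using that Kbound_add[OF Kbound_Knorm Kbound_Knorm] by (blast intro: Kbound_imp_inK Knorm_le)+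
  show "inK \<alpha> \<beta> (\<lambda>x y. K x y ** K' x y)"
    "Knorm \<alpha> \<beta> (\<lambda>x y. K x y ** K' x y) \<le> 6 * Knorm \<alpha> \<beta> K * Knorm \<alpha> \<beta> K'"
    if "inK \<alpha> \<beta> K \<and> inK \<alpha> \<beta> K'"
    for K :: "'u \<Rightarrow> 's \<Rightarrow> real^'n^'m" and K' :: "'u \<Rightarrow> 's \<Rightarrow> real^'p^'n"
    using that Kbound_mult[OF Kbound_Knorm Kbound_Knorm \<beta>]
    by (blast intro: Kbound_imp_inK Knorm_le)+
  show "inK \<alpha> \<beta> (\<lambda>x y. matrix_inv (K x y))"
    "Knorm \<alpha> \<beta> (\<lambda>x y. matrix_inv (K x y)) \<le> 5 * max 1 (h ^ 3) * max 1 (Knorm \<alpha> \<beta> K ^ 3)"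
    if "inK \<alpha> \<beta> K \<and> (\<forall>x y. invertible (K x y)) \<and> (\<forall>x y. mnorm (matrix_inv (K x y)) \<le> h)"
    for K :: "'u \<Rightarrow> 's \<Rightarrow> real^'q^'q" and h
    using that Kbound_matrix_inv[OF Kbound_Knorm \<beta>]
    by (blast intro: Kbound_imp_inK Knorm_le)+
qed

end
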